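(* Assume $d_{min}\ge d_{close}+d_{open}$, and let $R$ be a regular run whose initial state has Dir = open and GateStatus = opened. (1) If the positive significant moments of Dir form an infinite sequence $\gamma_1<\gamma_2<\gamma_3<\cdots$, then the positive significant moments of GateStatus form an infinite sequence $\delta_1<\delta_2<\delta_3<\cdots$ with $\delta_i\in(\gamma_i,\gamma_{i+1})$ for every $i$. (2) If the positive significant moments of Dir form a finite sequence $\gamma_1<\cdots<\gamma_n$, then the positive significant moments of GateStatus form a sequence $\delta_1<\cdots<\delta_n$ with $\delta_i\in(\gamma_i,\gamma_{i+1})$ for $i<n$ and $\delta_n>\gamma_n$.
   Context: Setting (evolving algebra for the railroad crossing). States are structures over a vocabulary containing: a finite universe Tracks; the reals and ExtendedReals $=\mathbb{R}\cup\{\infty\}$ with standard $<$ and $+$ ($\infty$ largest); a nullary real-valued symbol $\mathrm{CT}$ (current time); positive real constants $d_{close},d_{open},d_{min},d_{max}$ with $d_{close}<d_{min}\le d_{max}$; a unary function TrackStatus from Tracks to $\{\text{empty},\text{coming},\text{incrossing}\}$; a unary function Deadline from Tracks to ExtendedReals; a nullary Dir with values in $\{\text{open},\text{close}\}$; a nullary GateStatus with values in $\{\text{opened},\text{closed}\}$. Put $W=d_{min}-d_{close}$ and $\Delta_{close}=d_{close}+(d_{max}-d_{min})=d_{max}-W$. For a track $x$, $s(x)$ is the condition [$\mathrm{TrackStatus}(x)=\text{empty}$ or $\mathrm{CT}+d_{open}<\mathrm{Deadline}(x)$], and SafeToOpen is $\forall x\in\mathrm{Tracks}\ s(x)$. The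 program has two modules (agents). Gate: simultaneously OpenGate "if Dir=open then GateStatus:=opened" and CloseGate "if Dir=close then GateStatus:=closed". Controller: simultaneously, for every track $x$, SetDeadline$(x)$ "if TrackStatus$(x)$=coming and Deadline$(x)=\infty$ then Deadline$(x):=\mathrm{CT}+W$", SignalClose$(x)$ "if $\mathrm{CT}=$Deadline$(x)$ then Dir:=close", ClearDeadline$(x)$ "if TrackStatus$(x)$=empty and Deadline$(x)<\infty$ then Deadline$(x):=\infty$", together with SignalOpen "if Dir=close and SafeToOpen then Dir:=open". Executing a module means computing all updates it generates in the current state and performing them simultaneously (nothing happens if the update set is inconsistent). A module is enabled at a state if its update set is consistent and contains an update that changes the state. TrackStatus is external (changed only by the environment); Deadline, Dir, GateStatus are internal (changed only by the modules); other symbols are static. Runs: for $t\mapsto R(t)$, $t\in[0,\infty)$, let $\rho(t)$ be the reduct of $R(t)$ without CT. $R$ is a pre-run if all $R(t)$ share a superuniverse, $\mathrm{CT}=t$ in $R(t)$, and for every $\tau>0$ there are $0=t_0<\dots<t_n=\tau$ with $\rho$ constant on each $(t_i,t_{i+1})$. For a term $e$ (free variables fixed), $e_t$ is its value in $R(t)$, $e_{t+}$ (resp. $e_{t-}$, $t>0$) its constant value on some $(t,t+\epsilon)$ (resp. $(t-\epsilon,t)$); likewise $\rho(t\pm)$. $e$ holds over an interval if it holds at each point; $e$ becomes (is set to) $a$ at $t$ if $e_{t-}\ne a=e_t$ or $e_t\neq a=e_{t+}$. A moment $t$ is significant for $e$ if every neighbourhood of $t$ contains a moment $a$ with $e_a\ne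 e_t$; positive significant moments are those $>0$. A pre-run is a run if (i) whenever $\rho(t+)\neq\rho(t)$, $\rho(t+)$ is the CT-free reduct of the result of executing some modules at $R(t)$ (these agents fire at $t$), with external functions equal in $\rho(t)$ and $\rho(t+)$; (ii) whenever $t>0$ and $\rho(t)\ne\rho(t-)$, they differ only in external functions. An agent is immediate if it fires at every moment it is enabled; bounded if immediate or there is $b>0$ with no interval $(t,t+b)$ over which it is enabled but never fires. Initial states: TrackStatus$(x)$=empty and Deadline$(x)=\infty$ for every track $x$. A regular run is a run $R$ with $R(0)$ initial such that: (Train Motion) for each track $x$ there is a finite or infinite sequence $0=t_0<t_1<t_2<\cdots$ (the significant moments of $x$) with TrackStatus$(x)$=empty over each $[t_{3i},t_{3i+1})$, =coming over each $[t_{3i+1},t_{3i+2})$ where $d_{min}\le t_{3i+2}-t_{3i+1}\le d_{max}$, =incrossing over each $[t_{3i+2},t_{3i+3})$, and, if the sequence is finite with last element $t_k$, then $3\mid k$ and TrackStatus$(x)$=empty over $[t_k,\infty)$; (Controller Timing) Controller is immediate; (Gate Timing) Gate is bounded, there is no interval $(t,t+d_{close})$ over which Dir=close and GateStatus=opened both hold, and no interval $(t,t+d_{open})$ over which Dir=open and GateStatus=closed both hold. *)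

theory Defs
  imports Main "HOL-Library.Extended_Real" "HOL-Library.FuncSet"
begin

datatype tstat = Empty | Coming | Incrossing
datatype dirv = DOpen | DClose
datatype gstat = Opened | Closed
datatype agent = Gate | Controller

text \<open>CT-free reduct of a state. Only the values on the universe Tracks are meaningful;
  run states are built with restrict, so values outside Tracks are undefined.\<close>
record 'tr st =
  ts :: "'tr \<Rightarrow> tstat"
  dl :: "'tr \<Rightarrow> ereal"
  dir :: dirv
  gate :: gstat

datatype 'tr upd = UDL 'tr ereal | UDir dirv | UGate gstat
datatype 'tr location = LDL 'tr | LDir | LGate

fun loc :: "'tr upd \<Rightarrow> 'tr location" where
  "loc (UDL x v) = LDL x" | "loc (UDir v) = LDir" | "loc (UGate v) = LGate"

definition consistent :: "'tr upd set \<Rightarrow> bool" where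
  "consistent U \<longleftrightarrow> (\<forall>u\<in>U. \<forall>v\<in>U. loc u = loc v \<longrightarrow> u = v)"

fun changes :: "'tr upd \<Rightarrow> 'tr st \<Rightarrow> bool" where
  "changes (UDL x v) s = (dl s x \<noteq> v)"
| "changes (UDir v) s = (dir s \<noteq> v)"
| "changes (UGate v) s = (gate s \<noteq> v)"

definition apply_upd :: "'tr upd set \<Rightarrow> 'tr st \<Rightarrow> 'tr st" where
  "apply_upd U s = s\<lparr> dl := (\<lambda>x. if \<exists>v. UDL x v \<in> U then (THE v. UDL x v \<in> U) else dl s x),
                      dir := (if \<exists>v. UDir v \<in> U then (THE v. UDir v \<in> U) else dir s),
                      gate := (if \<exists>v. UGate v \<in> U then (THE v. UGate v \<in> U) else gate s) \<rparr>"

definition safe_to_open :: "'tr set \<Rightarrow> real \<Rightarrow> real \<Rightarrow> 'tr st \<Rightarrow> bool" where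
  "safe_to_open Tracks dopen t s \<longleftrightarrow>
     (\<forall>x\<in>Tracks. ts s x = Empty \<or> ereal (t + dopen) < dl s x)"

text \<open>Update set generated by a module at the state s with CT = t.
  W = dmin - dclose.\<close>
fun upds :: "'tr set \<Rightarrow> real \<Rightarrow> real \<Rightarrow> real \<Rightarrow> agent \<Rightarrow> real \<Rightarrow> 'tr st \<Rightarrow> 'tr upd set" where
  "upds Tracks dclose dopen dmin Gate t s =
     (if dir s = DOpen then {UGate Opened} else {}) \<union>
     (if dir s = DClose then {UGate Closed} else {})"
| "upds Tracks dclose dopen dmin Controller t s =
     (\<Union>x\<in>Tracks.
        (if ts s x = Coming \<and> dl s x = \<infinity> then {UDL x (ereal (t + (dmin - dclose)))} else {}) \<union>
        (if ereal t = dl s x then {UDir DClose} else {}) \<union>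
        (if ts s x = Empty \<and> dl s x < \<infinity> then {UDL x \<infinity>} else {}))
     \<union> (if dir s = DClose \<and> safe_to_open Tracks dopen t s then {UDir DOpen} else {})"

definition enabled :: "'tr set \<Rightarrow> real \<Rightarrow> real \<Rightarrow> real \<Rightarrow> agent \<Rightarrow> real \<Rightarrow> 'tr st \<Rightarrow> bool" where
  "enabled Tracks dclose dopen dmin A t s \<longleftrightarrow>
     consistent (upds Tracks dclose dopen dmin A t s) \<and>
     (\<exists>u\<in>upds Tracks dclose dopen dmin A t s. changes u s)"

definition exec :: "'tr set \<Rightarrow> real \<Rightarrow> real \<Rightarrow> real \<Rightarrow> agent set \<Rightarrow> real \<Rightarrow> 'tr st \<Rightarrow> 'tr st" where
  "exec Tracks dclose dopen dmin M t s =
     apply_upd (\<Union>A\<in>M. if consistent (upds Tracks dclose dopen dmin A t s)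
                        then upds Tracks dclose dopen dmin A t s else {}) s"

definition rho :: "'tr set \<Rightarrow> (real \<Rightarrow> 'tr \<Rightarrow> tstat) \<Rightarrow> (real \<Rightarrow> 'tr \<Rightarrow> ereal) \<Rightarrow>
                   (real \<Rightarrow> dirv) \<Rightarrow> (real \<Rightarrow> gstat) \<Rightarrow> real \<Rightarrow> 'tr st" where
  "rho Tracks TS DL Di GS t =
     \<lparr> ts = restrict (TS t) Tracks, dl = restrict (DL t) Tracks, dir = Di t, gate = GS t \<rparr>"

definition right_val :: "(real \<Rightarrow> 'b) \<Rightarrow> real \<Rightarrow> 'b \<Rightarrow> bool" where
  "right_val f t v \<longleftrightarrow> (\<exists>\<epsilon>>0. \<forall>u. t < u \<and> u < t + \<epsilon> \<longrightarrow> f u = v)"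

definition left_val :: "(real \<Rightarrow> 'b) \<Rightarrow> real \<Rightarrow> 'b \<Rightarrow> bool" where
  "left_val f t v \<longleftrightarrow> (\<exists>\<epsilon>>0. \<forall>u. t - \<epsilon> < u \<and> u < t \<longrightarrow> f u = v)"

definition pre_run :: "(real \<Rightarrow> 'b) \<Rightarrow> bool" where
  "pre_run f \<longleftrightarrow> (\<forall>\<tau>>0. \<exists>(n::nat) (tt::nat \<Rightarrow> real). tt 0 = 0 \<and> tt n = \<tau> \<and>
      (\<forall>i<n. tt i < tt (Suc i)) \<and>
      (\<forall>i<n. \<forall>u v. tt i < u \<and> u < tt (Suc i) \<and> tt i < v \<and> v < tt (Suc i) \<longrightarrow> f u = f v))"

definition is_run :: "'tr set \<Rightarrow> real \<Rightarrow> real \<Rightarrow> real \<Rightarrow> (real \<Rightarrow> 'tr \<Rightarrow> tstat) \<Rightarrow>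
     (real \<Rightarrow> 'tr \<Rightarrow> ereal) \<Rightarrow> (real \<Rightarrow> dirv) \<Rightarrow> (real \<Rightarrow> gstat) \<Rightarrow> bool" where
  "is_run Tracks dclose dopen dmin TS DL Di GS \<longleftrightarrow>
     (let r = rho Tracks TS DL Di GS in
       pre_run r \<and>
       (\<forall>t\<ge>0. \<forall>s. right_val r t s \<and> s \<noteq> r t \<longrightarrow>
          (\<exists>M. s = exec Tracks dclose dopen dmin M t (r t)) \<and> ts s = ts (r t)) \<and>
       (\<forall>t>0. \<forall>s. left_val r t s \<and> s \<noteq> r t \<longrightarrow>
          dl s = dl (r t) \<and> dir s = dir (r t) \<and> gate s = gate (r t)))"

definition fires :: "'tr set \<Rightarrow> real \<Rightarrow> real \<Rightarrow> real \<Rightarrow> (real \<Rightarrow> 'tr \<Rightarrow> tstat) \<Rightarrow>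
     (real \<Rightarrow> 'tr \<Rightarrow> ereal) \<Rightarrow> (real \<Rightarrow> dirv) \<Rightarrow> (real \<Rightarrow> gstat) \<Rightarrow> agent \<Rightarrow> real \<Rightarrow> bool" where
  "fires Tracks dclose dopen dmin TS DL Di GS A t \<longleftrightarrow>
     (let r = rho Tracks TS DL Di GS in
       \<exists>s. right_val r t s \<and> s \<noteq> r t \<and>
           (\<exists>M. A \<in> M \<and> s = exec Tracks dclose dopen dmin M t (r t)))"

definition phase_ok :: "(real \<Rightarrow> tstat) \<Rightarrow> real \<Rightarrow> real \<Rightarrow> (nat \<Rightarrow> real) \<Rightarrow> nat \<Rightarrow> bool" where
  "phase_ok f dmin dmax tt i \<longleftrightarrow>
     (\<forall>t. tt (3*i) \<le> t \<and> t < tt (3*i+1) \<longrightarrow> f t = Empty) \<and>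
     (\<forall>t. tt (3*i+1) \<le> t \<and> t < tt (3*i+2) \<longrightarrow> f t = Coming) \<and>
     dmin \<le> tt (3*i+2) - tt (3*i+1) \<and> tt (3*i+2) - tt (3*i+1) \<le> dmax \<and>
     (\<forall>t. tt (3*i+2) \<le> t \<and> t < tt (3*i+3) \<longrightarrow> f t = Incrossing)"

definition train_motion :: "(real \<Rightarrow> tstat) \<Rightarrow> real \<Rightarrow> real \<Rightarrow> bool" where
  "train_motion f dmin dmax \<longleftrightarrow>
     (\<exists>tt::nat \<Rightarrow> real. tt 0 = 0 \<and> strict_mono tt \<and> (\<forall>i. phase_ok f dmin dmax tt i)) \<or>
     (\<exists>(tt::nat \<Rightarrow> real) k. tt 0 = 0 \<and> 3 dvd k \<and> (\<forall>i j. i < j \<and> j \<le> k \<longrightarrow> tt i < tt j) \<and>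
        (\<forall>i. 3*i+3 \<le> k \<longrightarrow> phase_ok f dmin dmax tt i) \<and>
        (\<forall>t\<ge>tt k. f t = Empty))"

definition regular_run :: "'tr set \<Rightarrow> real \<Rightarrow> real \<Rightarrow> real \<Rightarrow> real \<Rightarrow> (real \<Rightarrow> 'tr \<Rightarrow> tstat) \<Rightarrow>
     (real \<Rightarrow> 'tr \<Rightarrow> ereal) \<Rightarrow> (real \<Rightarrow> dirv) \<Rightarrow> (real \<Rightarrow> gstat) \<Rightarrow> bool" where
  "regular_run Tracks dclose dopen dmin dmax TS DL Di GS \<longleftrightarrow>
     (let r = rho Tracks TS DL Di GS;
          en = (\<lambda>A t. enabled Tracks dclose dopen dmin A t (r t));
          fi = fires Tracks dclose dopen dmin TS DL Di GS in
       is_run Tracks dclose dopen dmin TS DL Di GS \<and>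
       (\<forall>x\<in>Tracks. TS 0 x = Empty \<and> DL 0 x = \<infinity>) \<and>
       (\<forall>x\<in>Tracks. train_motion (\<lambda>t. TS t x) dmin dmax) \<and>
       (\<forall>t\<ge>0. en Controller t \<longrightarrow> fi Controller t) \<and>
       ((\<forall>t\<ge>0. en Gate t \<longrightarrow> fi Gate t) \<or>
        (\<exists>b>0. \<not> (\<exists>t\<ge>0. \<forall>u. t < u \<and> u < t + b \<longrightarrow> en Gate u \<and> \<not> fi Gate u))) \<and>
       \<not> (\<exists>t\<ge>0. \<forall>u. t < u \<and> u < t + dclose \<longrightarrow> Di u = DClose \<and> GS u = Opened) \<and>
       \<not> (\<exists>t\<ge>0. \<forall>u. t < u \<and> u < t + dopen \<longrightarrow> Di u = DOpen \<and> GS u = Closed))"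

definition pos_sig :: "(real \<Rightarrow> 'b) \<Rightarrow> real set" where
  "pos_sig f = {t. t > 0 \<and> (\<forall>\<epsilon>>0. \<exists>a\<ge>0. \<bar>a - t\<bar> < \<epsilon> \<and> f a \<noteq> f t)}"

end

theory Submission
  imports Defs
begin

text \<open>Dir changes only when the Controller fires, and a deadline c + W, set when a train
  arrives at c, stays pending while that train is on its track. So when Dir switches to close
  at a, the train whose deadline expired is still coming throughout (a, a + dclose] and keeps
  SafeToOpen false; and when Dir switches to open at a, no deadline can expire before
  a + dopen, because W \<ge> dopen means it would already have been pending at a. Hence after each
  change Dir keeps its new value for at least the time the gate is given to follow it. The
  gate timing makes GateStatus reach the matching value within that time, and since the Gate
  only ever moves GateStatus to the value matching Dir, it cannot change again before the next
  change of Dir. So exactly one change of GateStatus lies between two consecutive changes of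
  Dir, and exactly one follows the last.\<close>

section \<open>Left and right values of piecewise constant functions\<close>

lemma right_val_unique:
  assumes "right_val f t v" and "right_val f t w"
  shows "v = w"
proof -
  obtain e1 where e1: "e1 > 0" "\<forall>u. t < u \<and> u < t + e1 \<longrightarrow> f u = v"
    using assms(1) unfolding right_val_def by blast
  obtain e2 where e2: "e2 > 0" "\<forall>u. t < u \<and> u < t + e2 \<longrightarrow> f u = w"
    using assms(2) unfolding right_val_def by blast
  define u where "u = t + min e1 e2 / 2"
  have "t < u" "u < t + e1" "u < t + e2" using e1(1) e2(1) unfolding u_def by auto
  then show ?thesis using e1(2) e2(2) by metis
qed

lemma right_valI: "0 < e \<Longrightarrow> (\<And>u. t < u \<Longrightarrow> u < t + e \<Longrightarrow> f u = v) \<Longrightarrow> right_val f t v"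
  unfolding right_val_def by blast

lemma left_valI: "0 < e \<Longrightarrow> (\<And>u. t - e < u \<Longrightarrow> u < t \<Longrightarrow> f u = v) \<Longrightarrow> left_val f t v"
  unfolding left_val_def by blast

lemma right_val_comp: "right_val f t v \<Longrightarrow> right_val (\<lambda>u. g (f u)) t (g v)"
  unfolding right_val_def by metis

lemma left_val_comp: "left_val f t v \<Longrightarrow> left_val (\<lambda>u. g (f u)) t (g v)"
  unfolding left_val_def by metis

lemma real_interval_induct:
  fixes a b t :: real
  assumes "a \<le> b" and "P a"
    and right_step: "\<And>s. a \<le> s \<Longrightarrow> s < b \<Longrightarrow> (\<And>u. a \<le> u \<Longrightarrow> u \<le> s \<Longrightarrow> P u) \<Longrightarrow>
                   \<exists>e>0. \<forall>u. s < u \<and> u < s + e \<longrightarrow> P u"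
    and left_step: "\<And>s. a < s \<Longrightarrow> s \<le> b \<Longrightarrow> (\<And>u. a \<le> u \<Longrightarrow> u < s \<Longrightarrow> P u) \<Longrightarrow> P s"
    and "a \<le> t" "t \<le> b"
  shows "P t"
proof -
  define S where "S = {s. a \<le> s \<and> s \<le> b \<and> (\<forall>u. a \<le> u \<and> u \<le> s \<longrightarrow> P u)}"
  define m where "m = Sup S"
  have "a \<in> S" using assms(1,2) unfolding S_def by auto
  have bdd: "bdd_above S" unfolding S_def bdd_above_def by auto
  have "a \<le> m" unfolding m_def using \<open>a \<in> S\<close> bdd by (rule cSup_upper)
  have "m \<le> b" unfolding m_def using \<open>a \<in> S\<close> by (intro cSup_least) (auto simp: S_def)
  have below: "P u" if "a \<le> u" "u < m" for u
  proof -
    have "u < Sup S" using that(2) unfolding m_def .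
    then obtain s where "s \<in> S" "u < s" using less_cSup_iff[of S u] \<open>a \<in> S\<close> bdd by auto
    then show ?thesis using that unfolding S_def by auto
  qed
  have "P m"
  proof (cases "m = a")
    case False
    then show ?thesis using left_step[OF _ \<open>m \<le> b\<close> below] \<open>a \<le> m\<close> by simp
  qed (use \<open>P a\<close> in simp)
  with below have upto: "P u" if "a \<le> u" "u \<le> m" for u
    using that by (cases "u = m") auto
  have "m = b"
  proof (rule ccontr)
    assume "m \<noteq> b"
    with \<open>m \<le> b\<close> have "m < b" by simp
    then obtain e where e: "e > 0" "\<forall>u. m < u \<and> u < m + e \<longrightarrow> P u"
      using right_step[of m] \<open>a \<le> m\<close> upto by blast
    define s where "s = min b (m + e / 2)"
    have "m < s" "s \<le> b" "s < m + e" using e(1) \<open>m < b\<close> unfolding s_def by auto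
    have "P u" if "a \<le> u" "u \<le> s" for u
      using upto[of u] e(2) that \<open>s < m + e\<close> by (cases "u \<le> m") auto
    then have "s \<in> S" unfolding S_def using \<open>a \<le> m\<close> \<open>m < s\<close> \<open>s \<le> b\<close> by auto
    then have "s \<le> m" unfolding m_def using bdd by (rule cSup_upper)
    then show False using \<open>m < b\<close> e unfolding s_def by auto
  qed
  then show ?thesis using upto assms(5,6) by simp
qed

lemma right_val_persists:
  fixes f :: "real \<Rightarrow> 'b"
  assumes start: "right_val f a v"
    and step: "\<And>s. a < s \<Longrightarrow> s < b \<Longrightarrow> f s = v \<Longrightarrow> right_val f s v"
    and left: "\<And>s. a < s \<Longrightarrow> s \<le> b \<Longrightarrow> left_val f s (f s)"
    and "a < t" "t \<le> b"
  shows "f t = v"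
proof -
  have "t = a \<or> f t = v"
  proof (rule real_interval_induct[where P = "\<lambda>u. u = a \<or> f u = v"])
    fix s assume "a \<le> s" "s < b" and IH: "\<And>u. a \<le> u \<Longrightarrow> u \<le> s \<Longrightarrow> u = a \<or> f u = v"
    then have "right_val f s v"
      using start step IH[of s] by (cases "s = a") auto
    then show "\<exists>e>0. \<forall>u. s < u \<and> u < s + e \<longrightarrow> u = a \<or> f u = v"
      unfolding right_val_def by blast
  next
    fix s assume "a < s" "s \<le> b" and IH: "\<And>u. a \<le> u \<Longrightarrow> u < s \<Longrightarrow> u = a \<or> f u = v"
    obtain e where e: "e > 0" "\<forall>u. s - e < u \<and> u < s \<longrightarrow> f u = f s"
      using left \<open>a < s\<close> \<open>s \<le> b\<close> unfolding left_val_def by blast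
    define p where "p = max ((a + s) / 2) (s - e / 2)"
    have "a < p" "p < s" "s - e < p"
      using \<open>a < s\<close> e(1) unfolding p_def by (auto simp: less_max_iff_disj)
    then show "s = a \<or> f s = v" using IH[of p] e(2) by auto
  qed (use assms in auto)
  then show ?thesis using \<open>a < t\<close> by simp
qed

lemma pos_sig_iff:
  fixes f :: "real \<Rightarrow> 'b"
  assumes "0 < t" and left: "left_val f t (f t)" and right: "right_val f t v"
  shows "t \<in> pos_sig f \<longleftrightarrow> v \<noteq> f t"
proof -
  obtain e1 where e1: "e1 > 0" "\<forall>u. t - e1 < u \<and> u < t \<longrightarrow> f u = f t"
    using left unfolding left_val_def by blast
  obtain e2 where e2: "e2 > 0" "\<forall>u. t < u \<and> u < t + e2 \<longrightarrow> f u = v"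
    using right unfolding right_val_def by blast
  show ?thesis
  proof
    assume "t \<in> pos_sig f"
    moreover have "0 < min e1 e2" using e1(1) e2(1) by simp
    ultimately obtain a where a: "\<bar>a - t\<bar> < min e1 e2" "f a \<noteq> f t"
      unfolding pos_sig_def by blast
    then have "t - e1 < a" "a < t + e2" "a \<noteq> t" by (auto simp: abs_less_iff)
    then show "v \<noteq> f t"
      using a(2) e1(2) e2(2) by (metis linorder_neqE_linordered_idom)
  next
    assume "v \<noteq> f t"
    have "\<exists>a\<ge>0. \<bar>a - t\<bar> < e \<and> f a \<noteq> f t" if "e > 0" for e
      using \<open>0 < t\<close> e2 \<open>v \<noteq> f t\<close> that
      by (intro exI[of _ "t + min e e2 / 2"]) auto
    then show "t \<in> pos_sig f" unfolding pos_sig_def using \<open>0 < t\<close> by blast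
  qed
qed

lemma bracket_index:
  fixes g :: "nat \<Rightarrow> real"
  assumes "g 0 \<le> t" and "t < g m"
  shows "\<exists>i<m. g i \<le> t \<and> t < g (Suc i)"
  using assms(2)
proof (induction m)
  case (Suc m)
  then show ?case by (cases "t < g m") (auto simp: not_less less_Suc_eq)
qed (use assms(1) in simp)

lemma pre_run_comp: "pre_run f \<Longrightarrow> pre_run (\<lambda>t. g (f t))"
  unfolding pre_run_def by metis

lemma pre_run_right_val:
  assumes "pre_run f" and "0 \<le> t"
  shows "\<exists>v. right_val f t v"
proof -
  obtain n tt where tt: "tt 0 = 0" "tt n = t + 1"
    and const: "\<forall>i<n. \<forall>u v. tt i < u \<and> u < tt (Suc i) \<and> tt i < v \<and> v < tt (Suc i) \<longrightarrow> f u = f v"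
    using assms unfolding pre_run_def by (meson add_nonneg_pos zero_less_one)
  obtain i where i: "i < n" "tt i \<le> t" "t < tt (Suc i)"
    using bracket_index[of tt t n] tt assms(2) by auto
  define m where "m = (t + tt (Suc i)) / 2"
  have m: "tt i < m" "m < tt (Suc i)" using i unfolding m_def by auto
  have "right_val f t (f m)"
  proof (rule right_valI)
    fix u assume "t < u" "u < t + (tt (Suc i) - t)"
    then have "tt i < u" "u < tt (Suc i)" using i by auto
    then show "f u = f m" using const i(1) m by blast
  qed (use i in simp)
  then show ?thesis ..
qed

lemma pre_run_left_val:
  assumes "pre_run f" and "0 < t"
  shows "\<exists>v. left_val f t v"
proof -
  obtain n tt where tt: "tt 0 = 0" "tt n = t" "\<forall>i<n. tt i < tt (Suc i)"
    and const: "\<forall>i<n. \<forall>u v. tt i < u \<and> u < tt (Suc i) \<and> tt i < v \<and> v < tt (Suc i) \<longrightarrow> f u = f v"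
    using assms unfolding pre_run_def by meson
  obtain k where k: "n = Suc k" using tt(1,2) assms(2) by (cases n) auto
  then have "tt k < t" using tt(2,3) by auto
  define m where "m = (tt k + t) / 2"
  have m: "tt k < m" "m < t" using \<open>tt k < t\<close> unfolding m_def by auto
  have "left_val f t (f m)"
  proof (rule left_valI)
    fix u assume "t - (t - tt k) < u" "u < t"
    then have "tt k < u" "u < tt (Suc k)" using k tt(2) by auto
    moreover have "m < tt (Suc k)" using m k tt(2) by simp
    ultimately show "f u = f m" using const k m(1) by blast
  qed (use \<open>tt k < t\<close> in simp)
  then show ?thesis ..
qed

lemma pre_run_finite_pos_sig:
  assumes "pre_run f"
  shows "finite (pos_sig f \<inter> {..<\<tau>})"
proof (cases "0 < \<tau>")
  case False
  then have "pos_sig f \<inter> {..<\<tau>} = {}" unfolding pos_sig_def by auto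
  then show ?thesis by simp
next
  case True
  obtain n tt where tt: "tt 0 = 0" "tt n = \<tau>"
    and const: "\<forall>i<n. \<forall>u v. tt i < u \<and> u < tt (Suc i) \<and> tt i < v \<and> v < tt (Suc i) \<longrightarrow> f u = f v"
    using assms True unfolding pre_run_def by meson
  have "pos_sig f \<inter> {..<\<tau>} \<subseteq> tt ` {..n}"
  proof
    fix t assume t: "t \<in> pos_sig f \<inter> {..<\<tau>}"
    then obtain i where i: "i < n" "tt i \<le> t" "t < tt (Suc i)"
      using bracket_index[of tt t n] tt unfolding pos_sig_def by auto
    show "t \<in> tt ` {..n}"
    proof (cases "t = tt i")
      case False
      then have "0 < min (t - tt i) (tt (Suc i) - t)" using i by simp
      then obtain a where "\<bar>a - t\<bar> < min (t - tt i) (tt (Suc i) - t)" "f a \<noteq> f t"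
        using t unfolding pos_sig_def by blast
      moreover have "tt i < a" "a < tt (Suc i)" "tt i < t"
        using calculation(1) i False by (auto simp: abs_less_iff)
      ultimately show ?thesis using const i by blast
    qed (use i in auto)
  qed
  then show ?thesis by (meson finite_atMost finite_imageI finite_subset)
qed

lemma constant_without_pos_sig:
  fixes f :: "real \<Rightarrow> 'b"
  assumes "pre_run f" and left: "\<And>s. 0 < s \<Longrightarrow> left_val f s (f s)"
    and "0 \<le> a" "right_val f a v"
    and quiet: "\<And>c. a < c \<Longrightarrow> c < b \<Longrightarrow> c \<notin> pos_sig f"
    and "a < t" "t \<le> b"
  shows "f t = v"
proof (rule right_val_persists[where b = b])
  fix s assume s: "a < s" "s < b" "f s = v"
  obtain w where w: "right_val f s w" using pre_run_right_val[OF assms(1)] s \<open>0 \<le> a\<close> by force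
  have "w = f s" using pos_sig_iff[OF _ left w] quiet s \<open>0 \<le> a\<close> by auto
  then show "right_val f s v" using w s by simp
qed (use assms in auto)

lemma pos_sig_between:
  fixes f :: "real \<Rightarrow> 'b"
  assumes "pre_run f" and "\<And>s. 0 < s \<Longrightarrow> left_val f s (f s)"
    and "0 \<le> a" "right_val f a (f a)" "a < u" "f u \<noteq> f a"
  obtains c where "a < c" "c < u" "c \<in> pos_sig f"
proof (rule ccontr)
  assume "\<not> thesis"
  then have "f u = f a"
    using constant_without_pos_sig[OF assms(1-4), of u u] that assms(5) by blast
  then show False using assms(6) by simp
qed

section \<open>Increasing enumerations\<close>

text \<open>I = {..<n} and I = UNIV cover the finite and the infinite case of the theorem.\<close>

definition increasing_enum :: "nat set \<Rightarrow> (nat \<Rightarrow> real) \<Rightarrow> real set \<Rightarrow> bool" where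
  "increasing_enum I \<gamma> S \<longleftrightarrow>
     (\<forall>i j. j \<in> I \<longrightarrow> i \<le> j \<longrightarrow> i \<in> I) \<and> (\<forall>i j. i < j \<longrightarrow> j \<in> I \<longrightarrow> \<gamma> i < \<gamma> j) \<and> \<gamma> ` I = S"

lemma increasing_enum_UNIV_iff:
  "increasing_enum UNIV \<gamma> S \<longleftrightarrow> strict_mono \<gamma> \<and> range \<gamma> = S"
  unfolding increasing_enum_def strict_mono_def by blast

lemma increasing_enum_lessThan_iff:
  "increasing_enum {..<n} \<gamma> S \<longleftrightarrow> (\<forall>i j. i < j \<and> j < n \<longrightarrow> \<gamma> i < \<gamma> j) \<and> \<gamma> ` {..<n} = S"
  unfolding increasing_enum_def by auto

lemma increasing_enumD:
  assumes "increasing_enum I \<gamma> S"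
  shows "j \<in> I \<Longrightarrow> i \<le> j \<Longrightarrow> i \<in> I" and "i < j \<Longrightarrow> j \<in> I \<Longrightarrow> \<gamma> i < \<gamma> j"
    and "i \<in> I \<Longrightarrow> \<gamma> i \<in> S" and "s \<in> S \<Longrightarrow> \<exists>i\<in>I. s = \<gamma> i"
  using assms unfolding increasing_enum_def by blast+

lemma increasing_enum_less_iff:
  assumes "increasing_enum I \<gamma> S" "i \<in> I" "j \<in> I"
  shows "\<gamma> i < \<gamma> j \<longleftrightarrow> i < j"
  using increasing_enumD(2)[OF assms(1)] assms(2,3) by (metis less_asym linorder_neqE_nat)

lemma increasing_enum_gap:
  assumes "increasing_enum I \<gamma> S" "i \<in> I" "\<gamma> i < c" "Suc i \<in> I \<Longrightarrow> c < \<gamma> (Suc i)"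
  shows "c \<notin> S"
proof
  assume "c \<in> S"
  then obtain j where j: "j \<in> I" "c = \<gamma> j" using increasing_enumD(4)[OF assms(1)] by blast
  then have "i < j" using increasing_enum_less_iff[OF assms(1,2)] assms(3) by blast
  then have "Suc i \<in> I" using increasing_enumD(1)[OF assms(1) j(1)] by simp
  then have "j < Suc i" using increasing_enum_less_iff[OF assms(1) j(1)] assms(4) j(2) by blast
  then show False using \<open>i < j\<close> by simp
qed

lemma increasing_enum_before_first:
  assumes "increasing_enum I \<gamma> S" "0 \<in> I \<Longrightarrow> c < \<gamma> 0"
  shows "c \<notin> S"
proof
  assume "c \<in> S"
  then obtain j where j: "j \<in> I" "c = \<gamma> j" using increasing_enumD(4)[OF assms(1)] by blast
  then have "c < \<gamma> 0" using assms(2) increasing_enumD(1)[OF assms(1) j(1)] by simp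
  moreover have "\<gamma> 0 \<le> \<gamma> j" using increasing_enumD(2)[OF assms(1), of 0 j] j(1) by (cases "j = 0") auto
  ultimately show False using j(2) by simp
qed

lemma increasing_enum_finite_below:
  assumes "increasing_enum I \<gamma> S" "finite (S \<inter> {..<t})"
  shows "finite {i \<in> I. \<gamma> i < t}"
proof (rule finite_imageD)
  show "inj_on \<gamma> {i \<in> I. \<gamma> i < t}"
  proof (rule inj_onI)
    fix k l assume "k \<in> {i \<in> I. \<gamma> i < t}" "l \<in> {i \<in> I. \<gamma> i < t}" "\<gamma> k = \<gamma> l"
    then show "k = l"
      using increasing_enum_less_iff[OF assms(1), of k l] increasing_enum_less_iff[OF assms(1), of l k]
      by (cases k l rule: linorder_cases) auto
  qed
  have "\<gamma> ` {i \<in> I. \<gamma> i < t} \<subseteq> S \<inter> {..<t}" using increasing_enumD(3)[OF assms(1)] by auto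
  then show "finite (\<gamma> ` {i \<in> I. \<gamma> i < t})" using assms(2) by (rule finite_subset)
qed

section \<open>Train motion\<close>

lemma phase_ok_arrival:
  fixes f :: "real \<Rightarrow> tstat"
  assumes phase: "phase_ok f dmin dmax tt i" and "tt (3*i) \<le> t" "t < tt (3*i+3)"
    and "f t \<noteq> Empty" and "0 < e" and before: "\<forall>u. t - e < u \<and> u < t \<longrightarrow> f u = Empty"
  shows "\<forall>u. t \<le> u \<and> u < t + dmin \<longrightarrow> f u = Coming"
proof -
  have empty: "\<forall>u. tt (3*i) \<le> u \<and> u < tt (3*i+1) \<longrightarrow> f u = Empty"
   and coming: "\<forall>u. tt (3*i+1) \<le> u \<and> u < tt (3*i+2) \<longrightarrow> f u = Coming"
   and long: "dmin \<le> tt (3*i+2) - tt (3*i+1)"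
   and crossing: "\<forall>u. tt (3*i+2) \<le> u \<and> u < tt (3*i+3) \<longrightarrow> f u = Incrossing"
    using phase unfolding phase_ok_def by blast+
  have "tt (3*i+1) \<le> t" using empty assms(2,4) by force
  have "t = tt (3*i+1)"
  proof (rule ccontr)
    assume "t \<noteq> tt (3*i+1)"
    define u where "u = max (tt (3*i+1)) (t - e/2)"
    have "t - e < u" "u < t" "tt (3*i+1) \<le> u" "u < tt (3*i+3)"
      using \<open>tt (3*i+1) \<le> t\<close> \<open>t \<noteq> tt (3*i+1)\<close> \<open>0 < e\<close> assms(3) unfolding u_def by auto
    then have "f u \<noteq> Empty" using coming crossing by (cases "u < tt (3*i+2)") force+
    then show False using before \<open>t - e < u\<close> \<open>u < t\<close> by blast
  qed
  then show ?thesis using coming long by auto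
qed

lemma phase_start_lower_bound:
  fixes tt :: "nat \<Rightarrow> real"
  assumes "tt 0 = 0" "strict_mono tt" "\<forall>i. phase_ok f dmin dmax tt i"
  shows "real i * dmin \<le> tt (3*i)"
proof (induction i)
  case (Suc i)
  have "dmin \<le> tt (3*i+2) - tt (3*i+1)" using assms(3) unfolding phase_ok_def by blast
  moreover have "tt (3*i) < tt (3*i+1)" "tt (3*i+2) < tt (3*i+3)"
    using assms(2) by (auto simp: strict_mono_def)
  ultimately show ?case using Suc.IH by (simp add: algebra_simps)
qed (use assms(1) in simp)

lemma train_motion_phase:
  assumes "train_motion f dmin dmax" and "0 < dmin" and "0 \<le> t" and "f t \<noteq> Empty"
  obtains tt i where "phase_ok f dmin dmax tt i" "tt (3*i) \<le> t" "t < tt (3*i+3)"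
  using assms(1) unfolding train_motion_def
proof (elim disjE exE conjE)
  fix tt :: "nat \<Rightarrow> real"
  assume "tt 0 = 0" "strict_mono tt" and phases: "\<forall>i. phase_ok f dmin dmax tt i"
  obtain m :: nat where "t / dmin < real m" using reals_Archimedean2 by blast
  then have "t < tt (3*m)"
    using phase_start_lower_bound[OF \<open>tt 0 = 0\<close> \<open>strict_mono tt\<close> phases, of m] assms(2)
    by (simp add: field_simps)
  then obtain i where "tt (3*i) \<le> t" "t < tt (3*i+3)"
    using bracket_index[of "\<lambda>k. tt (3*k)" t m] \<open>tt 0 = 0\<close> assms(3) by (auto simp: add.commute)
  then show thesis using that phases by blast
next
  fix tt :: "nat \<Rightarrow> real" and k :: nat
  assume "tt 0 = 0" "3 dvd k" and phases: "\<forall>i. 3*i+3 \<le> k \<longrightarrow> phase_ok f dmin dmax tt i"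
    and "\<forall>t\<ge>tt k. f t = Empty"
  then obtain m where k: "k = 3*m" and "t < tt (3*m)"
    using assms(4) by (metis dvd_def not_le)
  then obtain i where "i < m" "tt (3*i) \<le> t" "t < tt (3*i+3)"
    using bracket_index[of "\<lambda>k. tt (3*k)" t m] \<open>tt 0 = 0\<close> assms(3) by (auto simp: add.commute)
  moreover have "3*i+3 \<le> k" using \<open>i < m\<close> k by simp
  ultimately show thesis using that phases by blast
qed

lemma train_motion_arrival:
  assumes "train_motion f dmin dmax" and "0 < dmin"
    and "0 \<le> t" and "f t \<noteq> Empty" and "0 < e" and "\<forall>u. t - e < u \<and> u < t \<longrightarrow> f u = Empty"
  shows "\<forall>u. t \<le> u \<and> u < t + dmin \<longrightarrow> f u = Coming"
proof -
  obtain tt i where "phase_ok f dmin dmax tt i" "tt (3*i) \<le> t" "t < tt (3*i+3)"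
    using train_motion_phase assms(1-4) by metis
  then show ?thesis using phase_ok_arrival assms(4-6) by blast
qed

section \<open>Update sets and their execution\<close>

fun gate_target :: "dirv \<Rightarrow> gstat" where
  "gate_target DOpen = Opened"
| "gate_target DClose = Closed"

lemma gate_target_eq_iff [simp]: "gate_target a = gate_target b \<longleftrightarrow> a = b"
  by (cases a; cases b) auto

lemma upds_Gate: "upds Tr dcl dop dmn Gate t s = {UGate (gate_target (dir s))}"
  by (cases "dir s") (auto simp: upds.simps)

lemma mem_upds_Controller:
  "u \<in> upds Tr dcl dop dmn Controller t s \<longleftrightarrow>
     (\<exists>x\<in>Tr. (u = UDL x (ereal (t + (dmn - dcl))) \<and> ts s x = Coming \<and> dl s x = \<infinity>) \<or>
             (u = UDir DClose \<and> ereal t = dl s x) \<or>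
             (u = UDL x \<infinity> \<and> ts s x = Empty \<and> dl s x < \<infinity>)) \<or>
     (u = UDir DOpen \<and> dir s = DClose \<and> safe_to_open Tr dop t s)"
  unfolding upds.simps UN_iff Un_iff if_split_mem2 by auto

declare upds.simps [simp del]

lemma UDir_mem_upds_Controller:
  "UDir v \<in> upds Tr dcl dop dmn Controller t s \<longleftrightarrow>
     (v = DClose \<and> (\<exists>x\<in>Tr. ereal t = dl s x)) \<or>
     (v = DOpen \<and> dir s = DClose \<and> safe_to_open Tr dop t s)"
  unfolding mem_upds_Controller by auto

lemma UDL_mem_upds_Controller:
  "UDL x v \<in> upds Tr dcl dop dmn Controller t s \<longleftrightarrow> x \<in> Tr \<and>
     ((v = ereal (t + (dmn - dcl)) \<and> ts s x = Coming \<and> dl s x = \<infinity>) \<or>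
      (v = \<infinity> \<and> ts s x = Empty \<and> dl s x < \<infinity>))"
  unfolding mem_upds_Controller by auto

lemma UGate_not_mem_upds_Controller [simp]: "UGate v \<notin> upds Tr dcl dop dmn Controller t s"
  unfolding mem_upds_Controller by auto

lemma consistent_upds_Controller:
  assumes "\<not> (UDir DClose \<in> upds Tr dcl dop dmn Controller t s \<and>
              UDir DOpen \<in> upds Tr dcl dop dmn Controller t s)"
  shows "consistent (upds Tr dcl dop dmn Controller t s)"
  unfolding consistent_def
proof (intro ballI impI)
  fix u w assume u: "u \<in> upds Tr dcl dop dmn Controller t s"
    and w: "w \<in> upds Tr dcl dop dmn Controller t s" and "loc u = loc w"
  then show "u = w"
    using assms by (cases u; cases w) (auto simp: UDL_mem_upds_Controller UDir_mem_upds_Controller)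
qed

lemma consistent_singleton [simp]: "consistent {u}"
  by (simp add: consistent_def)

lemma the_UDir: "consistent U \<Longrightarrow> UDir v \<in> U \<Longrightarrow> (THE v. UDir v \<in> U) = v"
  unfolding consistent_def by (rule the_equality) force+

lemma the_UDL: "consistent U \<Longrightarrow> UDL x v \<in> U \<Longrightarrow> (THE v. UDL x v \<in> U) = v"
  unfolding consistent_def by (rule the_equality) force+

lemma the_UGate: "consistent U \<Longrightarrow> UGate v \<in> U \<Longrightarrow> (THE v. UGate v \<in> U) = v"
  unfolding consistent_def by (rule the_equality) force+

lemma apply_upd_unchanged:
  assumes "consistent U" and "\<forall>u\<in>U. \<not> changes u s"
  shows "apply_upd U s = s"
proof -
  have "dl (apply_upd U s) = dl s" "dir (apply_upd U s) = dir s" "gate (apply_upd U s) = gate s"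
    using assms the_UDL[OF assms(1)] the_UDir[OF assms(1)] the_UGate[OF assms(1)]
    by (fastforce simp: apply_upd_def)+
  moreover have "ts (apply_upd U s) = ts s" "st.more (apply_upd U s) = st.more s"
    by (simp_all add: apply_upd_def)
  ultimately show ?thesis by (metis st.equality)
qed

lemma apply_upd_dir: "dir (apply_upd U s) = (if \<exists>v. UDir v \<in> U then THE v. UDir v \<in> U else dir s)"
  by (simp add: apply_upd_def)

lemma apply_upd_dl: "dl (apply_upd U s) x = (if \<exists>v. UDL x v \<in> U then THE v. UDL x v \<in> U else dl s x)"
  by (simp add: apply_upd_def)

lemma apply_upd_Controller_dir:
  assumes "consistent (upds Tr dcl dop dmn Controller t s)"
  shows "dir (apply_upd (upds Tr dcl dop dmn Controller t s) s) =
    (if \<exists>x\<in>Tr. ereal t = dl s x then DClose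
     else if dir s = DClose \<and> safe_to_open Tr dop t s then DOpen else dir s)"
proof (cases "\<exists>x\<in>Tr. ereal t = dl s x")
  case True
  then have "UDir DClose \<in> upds Tr dcl dop dmn Controller t s"
    by (simp add: UDir_mem_upds_Controller)
  then show ?thesis using True the_UDir[OF assms] unfolding apply_upd_dir by auto
next
  case False
  show ?thesis
  proof (cases "dir s = DClose \<and> safe_to_open Tr dop t s")
    case True
    then have "UDir DOpen \<in> upds Tr dcl dop dmn Controller t s"
      by (simp add: UDir_mem_upds_Controller)
    then show ?thesis using True False the_UDir[OF assms] unfolding apply_upd_dir by auto
  next
    case False
    then have "\<nexists>v. UDir v \<in> upds Tr dcl dop dmn Controller t s"
      using \<open>\<not> (\<exists>x\<in>Tr. ereal t = dl s x)\<close> by (simp add: UDir_mem_upds_Controller)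
    then show ?thesis using False \<open>\<not> (\<exists>x\<in>Tr. ereal t = dl s x)\<close>
      unfolding apply_upd_dir by auto
  qed
qed

lemma apply_upd_Controller_dl:
  assumes "consistent (upds Tr dcl dop dmn Controller t s)" and "x \<in> Tr"
  shows "dl (apply_upd (upds Tr dcl dop dmn Controller t s) s) x =
    (if ts s x = Coming \<and> dl s x = \<infinity> then ereal (t + (dmn - dcl))
     else if ts s x = Empty \<and> dl s x < \<infinity> then \<infinity> else dl s x)"
proof (cases "ts s x = Coming \<and> dl s x = \<infinity>")
  case True
  then have "UDL x (ereal (t + (dmn - dcl))) \<in> upds Tr dcl dop dmn Controller t s"
    using assms(2) by (simp add: UDL_mem_upds_Controller)
  then show ?thesis using True the_UDL[OF assms(1)] unfolding apply_upd_dl by auto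
next
  case False
  show ?thesis
  proof (cases "ts s x = Empty \<and> dl s x < \<infinity>")
    case True
    then have "UDL x \<infinity> \<in> upds Tr dcl dop dmn Controller t s"
      using assms(2) by (simp add: UDL_mem_upds_Controller)
    then show ?thesis using True False the_UDL[OF assms(1)] unfolding apply_upd_dl by auto
  next
    case False
    then have "\<nexists>v. UDL x v \<in> upds Tr dcl dop dmn Controller t s"
      using \<open>\<not> (ts s x = Coming \<and> dl s x = \<infinity>)\<close> by (auto simp: UDL_mem_upds_Controller)
    then show ?thesis using False \<open>\<not> (ts s x = Coming \<and> dl s x = \<infinity>)\<close>
      unfolding apply_upd_dl by auto
  qed
qed

lemma UN_agent:
  "(\<Union>A\<in>M. F A) = (if Gate \<in> M then F Gate else {}) \<union> (if Controller \<in> M then F Controller else {})"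
proof (intro set_eqI iffI)
  fix u assume "u \<in> (\<Union>A\<in>M. F A)"
  then obtain A where "A \<in> M" "u \<in> F A" by blast
  then show "u \<in> (if Gate \<in> M then F Gate else {}) \<union> (if Controller \<in> M then F Controller else {})"
    by (cases A) auto
qed (auto split: if_splits)

lemma exec_eq_apply_upd:
  "exec Tr dcl dop dmn M t s = apply_upd
     ((if Gate \<in> M then {UGate (gate_target (dir s))} else {}) \<union>
      (if Controller \<in> M \<and> consistent (upds Tr dcl dop dmn Controller t s)
       then upds Tr dcl dop dmn Controller t s else {})) s"
  unfolding exec_def UN_agent by (simp add: upds_Gate)

lemma exec_gate:
  "gate (exec Tr dcl dop dmn M t s) = (if Gate \<in> M then gate_target (dir s) else gate s)"
  unfolding exec_eq_apply_upd by (auto simp: apply_upd_def)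

lemma exec_dir:
  "dir (exec Tr dcl dop dmn M t s) =
    (if Controller \<in> M \<and> consistent (upds Tr dcl dop dmn Controller t s)
     then dir (apply_upd (upds Tr dcl dop dmn Controller t s) s) else dir s)"
  unfolding exec_eq_apply_upd by (simp add: apply_upd_def)

lemma exec_dl:
  "dl (exec Tr dcl dop dmn M t s) =
    (if Controller \<in> M \<and> consistent (upds Tr dcl dop dmn Controller t s)
     then dl (apply_upd (upds Tr dcl dop dmn Controller t s) s) else dl s)"
  unfolding exec_eq_apply_upd by (auto simp: apply_upd_def fun_eq_iff)

lemma exec_empty: "exec Tr dcl dop dmn {} t s = s"
  by (simp add: exec_def apply_upd_def)

section \<open>Regular runs and the deadline invariant\<close>

locale crossing_run =
  fixes Tracks :: "'tr set" and dclose dopen dmin dmax :: real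
    and TS :: "real \<Rightarrow> 'tr \<Rightarrow> tstat" and DL :: "real \<Rightarrow> 'tr \<Rightarrow> ereal"
    and Di :: "real \<Rightarrow> dirv" and GS :: "real \<Rightarrow> gstat"
  assumes dclose_pos: "0 < dclose" and dopen_pos: "0 < dopen"
    and dclose_less_dmin: "dclose < dmin"
    and regular: "regular_run Tracks dclose dopen dmin dmax TS DL Di GS"
begin

abbreviation "\<rho> \<equiv> rho Tracks TS DL Di GS"
abbreviation "ctrl t \<equiv> upds Tracks dclose dopen dmin Controller t (\<rho> t)"
abbreviation "W \<equiv> dmin - dclose"

lemma rho_simps [simp]:
  "dir (\<rho> t) = Di t" "gate (\<rho> t) = GS t"
  "x \<in> Tracks \<Longrightarrow> dl (\<rho> t) x = DL t x" "x \<in> Tracks \<Longrightarrow> ts (\<rho> t) x = TS t x"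
  by (simp_all add: rho_def)

lemma safe_to_open_rho:
  "safe_to_open Tracks dopen t (\<rho> t) \<longleftrightarrow> (\<forall>x\<in>Tracks. TS t x = Empty \<or> ereal (t + dopen) < DL t x)"
  by (simp add: safe_to_open_def)

lemma dmin_pos: "0 < dmin"
  using dclose_pos dclose_less_dmin by simp

lemma
  shows run: "is_run Tracks dclose dopen dmin TS DL Di GS"
    and initial: "x \<in> Tracks \<Longrightarrow> TS 0 x = Empty \<and> DL 0 x = \<infinity>"
    and train_motion: "x \<in> Tracks \<Longrightarrow> train_motion (\<lambda>t. TS t x) dmin dmax"
    and controller_immediate: "0 \<le> t \<Longrightarrow> enabled Tracks dclose dopen dmin Controller t (\<rho> t) \<Longrightarrow>
           fires Tracks dclose dopen dmin TS DL Di GS Controller t"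
    and close_timing: "0 \<le> t \<Longrightarrow> \<exists>u. t < u \<and> u < t + dclose \<and> \<not> (Di u = DClose \<and> GS u = Opened)"
    and open_timing: "0 \<le> t \<Longrightarrow> \<exists>u. t < u \<and> u < t + dopen \<and> \<not> (Di u = DOpen \<and> GS u = Closed)"
  using regular unfolding regular_run_def Let_def by blast+

lemma pre_run_rho: "pre_run \<rho>"
  using run unfolding is_run_def Let_def by blast

lemma right_val_rho_exec:
  assumes "0 \<le> t" and "right_val \<rho> t s"
  shows "\<exists>M. s = exec Tracks dclose dopen dmin M t (\<rho> t)" and "ts s = ts (\<rho> t)"
  using run assms exec_empty unfolding is_run_def Let_def by (metis (no_types, lifting))+

lemma left_val_rho_internal:
  assumes "0 < t" and "left_val \<rho> t s"
  shows "dl s = dl (\<rho> t)" and "dir s = Di t" and "gate s = GS t"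
  using run assms unfolding is_run_def Let_def by (metis rho_simps(1,2))+

lemma left_val_Di: "0 < t \<Longrightarrow> left_val Di t (Di t)"
  using pre_run_left_val[OF pre_run_rho] left_val_comp[of \<rho> t _ dir] left_val_rho_internal(2)
  by fastforce

lemma left_val_GS: "0 < t \<Longrightarrow> left_val GS t (GS t)"
  using pre_run_left_val[OF pre_run_rho] left_val_comp[of \<rho> t _ gate] left_val_rho_internal(3)
  by fastforce

lemma left_val_DL: "0 < t \<Longrightarrow> x \<in> Tracks \<Longrightarrow> left_val (\<lambda>u. DL u x) t (DL t x)"
  using pre_run_left_val[OF pre_run_rho] left_val_comp[of \<rho> t _ "\<lambda>s. dl s x"] left_val_rho_internal(1)
  by fastforce

lemma ex_left_val_TS: "0 < t \<Longrightarrow> x \<in> Tracks \<Longrightarrow> \<exists>v. left_val (\<lambda>u. TS u x) t v"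
  using pre_run_left_val[OF pre_run_rho] left_val_comp[of \<rho> t _ "\<lambda>s. ts s x"] by fastforce

lemma pre_run_Di: "pre_run Di"
  using pre_run_comp[OF pre_run_rho, of dir] by simp

lemma pre_run_GS: "pre_run GS"
  using pre_run_comp[OF pre_run_rho, of gate] by simp

lemma right_val_rho_controller:
  assumes "0 \<le> t" and s: "right_val \<rho> t s" and cons: "consistent (ctrl t)"
  shows "dir s = dir (apply_upd (ctrl t) (\<rho> t))" and "dl s = dl (apply_upd (ctrl t) (\<rho> t))"
proof -
  have "dir s = dir (apply_upd (ctrl t) (\<rho> t)) \<and> dl s = dl (apply_upd (ctrl t) (\<rho> t))"
  proof (cases "enabled Tracks dclose dopen dmin Controller t (\<rho> t)")
    case True
    then obtain s' M where "right_val \<rho> t s'" "Controller \<in> M"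
      "s' = exec Tracks dclose dopen dmin M t (\<rho> t)"
      using controller_immediate assms(1) unfolding fires_def Let_def by blast
    moreover have "s' = s" by (rule right_val_unique[OF calculation(1) s])
    ultimately show ?thesis using cons by (simp add: exec_dir exec_dl)
  next
    case False
    then have "apply_upd (ctrl t) (\<rho> t) = \<rho> t"
      using cons apply_upd_unchanged unfolding enabled_def by blast
    moreover obtain M where "s = exec Tracks dclose dopen dmin M t (\<rho> t)"
      using right_val_rho_exec assms(1) s by blast
    ultimately show ?thesis by (simp add: exec_dir exec_dl)
  qed
  then show "dir s = dir (apply_upd (ctrl t) (\<rho> t))" and "dl s = dl (apply_upd (ctrl t) (\<rho> t))"
    by simp_all
qed

definition arrival :: "'tr \<Rightarrow> real \<Rightarrow> bool" where
  "arrival x c \<longleftrightarrow> (\<exists>e>0. \<forall>u. c - e < u \<and> u < c \<longrightarrow> TS u x = Empty) \<and>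
     (\<forall>u. c \<le> u \<and> u < c + dmin \<longrightarrow> TS u x = Coming)"

text \<open>SetDeadline fires just after a train arrives at c and ClearDeadline just after the
  track is empty again, so the deadline c + W is pending exactly in between; at c itself it
  is still \<infinity>.\<close>

definition deadline_inv :: "'tr \<Rightarrow> real \<Rightarrow> bool" where
  "deadline_inv x t \<longleftrightarrow>
     (DL t x = \<infinity> \<and> (TS t x \<noteq> Empty \<longrightarrow> arrival x t)) \<or>
     (\<exists>c. arrival x c \<and> c < t \<and> DL t x = ereal (c + W) \<and> (\<forall>u. c \<le> u \<and> u < t \<longrightarrow> TS u x \<noteq> Empty))"

definition next_deadline :: "'tr \<Rightarrow> real \<Rightarrow> ereal" where
  "next_deadline x t =
     (if TS t x = Coming \<and> DL t x = \<infinity> then ereal (t + W)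
      else if TS t x = Empty \<and> DL t x < \<infinity> then \<infinity> else DL t x)"

lemma arrivalI:
  assumes "x \<in> Tracks" "0 \<le> t" "TS t x \<noteq> Empty" "0 < e" "\<forall>u. t - e < u \<and> u < t \<longrightarrow> TS u x = Empty"
  shows "arrival x t"
  using train_motion_arrival[OF train_motion dmin_pos] assms unfolding arrival_def by blast

lemma arrival_Coming: "arrival x c \<Longrightarrow> c \<le> u \<Longrightarrow> u < c + dmin \<Longrightarrow> TS u x = Coming"
  unfolding arrival_def by blast

lemma arrival_preceded_by_Empty:
  assumes "arrival x c" and "b < c"
  obtains w where "b \<le> w" "w < c" "TS w x = Empty"
proof -
  obtain e where "0 < e" "\<forall>u. c - e < u \<and> u < c \<longrightarrow> TS u x = Empty"
    using assms(1) unfolding arrival_def by blast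
  moreover have "b \<le> max b (c - e / 2)" "max b (c - e / 2) < c" "c - e < max b (c - e / 2)"
    using assms(2) \<open>0 < e\<close> by auto
  ultimately show thesis using that by blast
qed

lemma arrival_unique:
  assumes "arrival x c" "arrival x c'" "c < t" "c' < t"
    and "\<forall>u. c \<le> u \<and> u < t \<longrightarrow> TS u x \<noteq> Empty" "\<forall>u. c' \<le> u \<and> u < t \<longrightarrow> TS u x \<noteq> Empty"
  shows "c = c'"
proof (rule ccontr)
  assume "c \<noteq> c'"
  then consider "c < c'" | "c' < c" by linarith
  then show False
  proof cases
    case 1
    then obtain w where "c \<le> w" "w < c'" "TS w x = Empty"
      using arrival_preceded_by_Empty assms(2) by blast
    then show False using assms(4,5) by auto
  next
    case 2
    then obtain w where "c' \<le> w" "w < c" "TS w x = Empty"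
      using arrival_preceded_by_Empty assms(1) by blast
    then show False using assms(3,6) by auto
  qed
qed

text \<open>An expiring deadline belongs to a train that is still coming, which makes SafeToOpen
  false; so SignalClose and SignalOpen never fire together.\<close>

lemma deadline_inv_consistent:
  assumes "\<forall>x\<in>Tracks. deadline_inv x t"
  shows "consistent (ctrl t)"
proof (rule consistent_upds_Controller, rule notI)
  assume both: "UDir DClose \<in> ctrl t \<and> UDir DOpen \<in> ctrl t"
  then obtain x where x: "x \<in> Tracks" "ereal t = DL t x"
    unfolding UDir_mem_upds_Controller by auto
  have safe: "TS t x = Empty \<or> ereal (t + dopen) < DL t x"
    using both x(1) unfolding UDir_mem_upds_Controller safe_to_open_rho by auto
  obtain c where "arrival x c" "c < t" "DL t x = ereal (c + W)"
    using assms x unfolding deadline_inv_def by auto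
  then have "TS t x = Coming"
    using x(2) dclose_pos by (intro arrival_Coming[of x c]) auto
  then have "ereal (t + dopen) < ereal t" using safe x(2) by auto
  then show False using dopen_pos by simp
qed

lemma right_val_rho_dl:
  assumes "0 \<le> t" "right_val \<rho> t s" "consistent (ctrl t)" "x \<in> Tracks"
  shows "dl s x = next_deadline x t"
proof -
  have "dl s x = dl (apply_upd (ctrl t) (\<rho> t)) x"
    using right_val_rho_controller(2)[OF assms(1-3)] by simp
  also have "\<dots> = next_deadline x t"
    unfolding apply_upd_Controller_dl[OF assms(3,4)] next_deadline_def
    by (simp only: rho_simps(3,4)[OF assms(4)])
  finally show ?thesis .
qed

lemma deadline_inv_step:
  assumes inv: "deadline_inv x t" and "t < u"
    and DL_u: "DL u x = next_deadline x t" and TS_u: "\<And>w. t < w \<Longrightarrow> w \<le> u \<Longrightarrow> TS w x = TS t x"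
  shows "deadline_inv x u"
proof (cases "TS t x = Empty")
  case True
  then have "DL u x = \<infinity>" using DL_u unfolding next_deadline_def by auto
  moreover have "TS u x = Empty" using TS_u True \<open>t < u\<close> by auto
  ultimately show ?thesis unfolding deadline_inv_def by simp
next
  case False
  then have present: "\<forall>w. t \<le> w \<and> w < u \<longrightarrow> TS w x \<noteq> Empty"
    using TS_u by (metis order_le_less order_less_imp_le)
  show ?thesis
  proof (cases "DL t x = \<infinity>")
    case True
    then have "arrival x t" using inv False unfolding deadline_inv_def by auto
    then have "TS t x = Coming" using arrival_Coming dmin_pos by auto
    then have "DL u x = ereal (t + W)" using DL_u True unfolding next_deadline_def by simp
    then show ?thesis unfolding deadline_inv_def using \<open>arrival x t\<close> \<open>t < u\<close> present by blast
  next
    case finite: False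
    then obtain c where c: "arrival x c" "c < t" "DL t x = ereal (c + W)"
      and "\<forall>w. c \<le> w \<and> w < t \<longrightarrow> TS w x \<noteq> Empty"
      using inv unfolding deadline_inv_def by auto
    then have "\<forall>w. c \<le> w \<and> w < u \<longrightarrow> TS w x \<noteq> Empty"
      using present by (metis not_le)
    moreover have "DL u x = DL t x" using DL_u False finite unfolding next_deadline_def by simp
    ultimately show ?thesis unfolding deadline_inv_def using c \<open>t < u\<close> by auto
  qed
qed

lemma deadline_inv_right:
  assumes "0 \<le> t" and inv: "\<forall>x\<in>Tracks. deadline_inv x t"
  shows "\<exists>e>0. \<forall>u. t < u \<and> u < t + e \<longrightarrow> (\<forall>x\<in>Tracks. deadline_inv x u)"
proof -
  obtain s where s: "right_val \<rho> t s" using pre_run_right_val[OF pre_run_rho assms(1)] ..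
  then obtain e where "0 < e" and const: "\<forall>u. t < u \<and> u < t + e \<longrightarrow> \<rho> u = s"
    unfolding right_val_def by blast
  have "deadline_inv x u" if "t < u" "u < t + e" "x \<in> Tracks" for u x
  proof (rule deadline_inv_step)
    have "\<rho> u = s" using const that(1,2) by blast
    then show "DL u x = next_deadline x t"
      using right_val_rho_dl[OF assms(1) s deadline_inv_consistent[OF inv] that(3)] that(3)
      by (metis rho_simps(3))
    show "TS w x = TS t x" if "t < w" "w \<le> u" for w
    proof -
      have "\<rho> w = s" using const that \<open>u < t + e\<close> by auto
      then show ?thesis using right_val_rho_exec(2)[OF assms(1) s] \<open>x \<in> Tracks\<close> by (metis rho_simps(4))
    qed
  qed (use inv that in auto)
  then show ?thesis using \<open>0 < e\<close> by blast
qed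

lemma arrival_from_left:
  assumes "x \<in> Tracks" "0 \<le> t" "0 < e" "TS t x \<noteq> Empty"
    and near: "\<And>u. t - e < u \<Longrightarrow> u < t \<Longrightarrow> deadline_inv x u \<and> TS u x = v \<and> DL u x = \<infinity>"
  shows "arrival x t"
proof (cases "v = Empty")
  case True
  then show ?thesis using arrivalI[OF assms(1,2,4,3)] near by simp
next
  case False
  define u1 where "u1 = t - e / 2"
  have "t - e < u1" "u1 < t" using \<open>0 < e\<close> unfolding u1_def by auto
  then have "deadline_inv x u1" "TS u1 x \<noteq> Empty" "DL u1 x = \<infinity>" using near False by auto
  then have "arrival x u1" unfolding deadline_inv_def by auto
  moreover have "t - 3 * e / 4 < u1" using \<open>0 < e\<close> unfolding u1_def by simp
  ultimately obtain w where "t - 3 * e / 4 \<le> w" "w < u1" "TS w x = Empty"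
    using arrival_preceded_by_Empty by blast
  moreover have "t - e < w" using calculation(1) \<open>0 < e\<close> by simp
  ultimately show ?thesis using near[of w] \<open>u1 < t\<close> False by simp
qed

lemma pending_deadline_from_left:
  assumes "0 < e" "DL t x \<noteq> \<infinity>"
    and near: "\<And>u. t - e < u \<Longrightarrow> u < t \<Longrightarrow> deadline_inv x u \<and> DL u x = DL t x"
  obtains c where "arrival x c" "c < t" "DL t x = ereal (c + W)"
    "\<forall>w. c \<le> w \<and> w < t \<longrightarrow> TS w x \<noteq> Empty"
proof -
  define u1 where "u1 = t - e / 2"
  have u1: "t - e < u1" "u1 < t" using \<open>0 < e\<close> unfolding u1_def by auto
  then obtain c where c: "arrival x c" "c < u1" "DL t x = ereal (c + W)"
    using near assms(2) unfolding deadline_inv_def by force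
  have "TS w x \<noteq> Empty" if "c \<le> w" "w < t" for w
  proof -
    define u where "u = max u1 ((w + t) / 2)"
    have u: "t - e < u" "u < t" "w < u" using u1 that unfolding u_def by (auto simp: less_max_iff_disj)
    then obtain c' where "DL t x = ereal (c' + W)" "\<forall>w. c' \<le> w \<and> w < u \<longrightarrow> TS w x \<noteq> Empty"
      using near assms(2) unfolding deadline_inv_def by force
    moreover have "c' = c" using calculation(1) c(3) by simp
    ultimately show ?thesis using that u(3) by blast
  qed
  then show thesis using that c u1 by auto
qed

lemma deadline_inv_left:
  assumes "0 < t" "x \<in> Tracks" and before: "\<And>u. 0 \<le> u \<Longrightarrow> u < t \<Longrightarrow> deadline_inv x u"
  shows "deadline_inv x t"
proof -
  obtain v where "left_val (\<lambda>u. TS u x) t v" using ex_left_val_TS assms(1,2) by blast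
  then obtain e1 where e1: "0 < e1" "\<forall>u. t - e1 < u \<and> u < t \<longrightarrow> TS u x = v"
    unfolding left_val_def by blast
  obtain e2 where e2: "0 < e2" "\<forall>u. t - e2 < u \<and> u < t \<longrightarrow> DL u x = DL t x"
    using left_val_DL[OF assms(1,2)] unfolding left_val_def by blast
  define e where "e = min t (min e1 e2)"
  have "0 < e" using assms(1) e1(1) e2(1) unfolding e_def by simp
  have near: "deadline_inv x u \<and> TS u x = v \<and> DL u x = DL t x" if "t - e < u" "u < t" for u
    using before[of u] e1(2) e2(2) that unfolding e_def by auto
  show ?thesis
  proof (cases "DL t x = \<infinity>")
    case True
    then have "TS t x \<noteq> Empty \<longrightarrow> arrival x t"
      using arrival_from_left[OF assms(2) _ \<open>0 < e\<close>] near assms(1) by simp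
    then show ?thesis unfolding deadline_inv_def using True by blast
  next
    case False
    then show ?thesis
      using pending_deadline_from_left[OF \<open>0 < e\<close> False] near unfolding deadline_inv_def by blast
  qed
qed

lemma deadline_inv_holds: "0 \<le> t \<Longrightarrow> x \<in> Tracks \<Longrightarrow> deadline_inv x t"
  using real_interval_induct[where P = "\<lambda>t. \<forall>x\<in>Tracks. deadline_inv x t" and a = 0 and b = t]
    initial deadline_inv_right deadline_inv_left
  unfolding deadline_inv_def[of _ 0] by auto

lemma consistent_ctrl: "0 \<le> t \<Longrightarrow> consistent (ctrl t)"
  using deadline_inv_consistent deadline_inv_holds by blast

section \<open>Changes of Dir and GateStatus\<close>

lemma deadline_expiry:
  assumes "0 \<le> t" "x \<in> Tracks" "ereal t = DL t x"
  shows "arrival x (t - W)" and "\<forall>u. t - W \<le> u \<and> u < t \<longrightarrow> TS u x \<noteq> Empty"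
proof -
  obtain c where "arrival x c" "DL t x = ereal (c + W)" "\<forall>u. c \<le> u \<and> u < t \<longrightarrow> TS u x \<noteq> Empty"
    using deadline_inv_holds[OF assms(1,2)] assms(3) unfolding deadline_inv_def by auto
  moreover have "c = t - W" using assms(3) calculation(2) by simp
  ultimately show "arrival x (t - W)" and "\<forall>u. t - W \<le> u \<and> u < t \<longrightarrow> TS u x \<noteq> Empty"
    by simp_all
qed

lemma deadline_while_present:
  assumes "0 \<le> u" "x \<in> Tracks" "arrival x c" "c < u"
    and present: "\<forall>w. c \<le> w \<and> w \<le> u \<longrightarrow> TS w x \<noteq> Empty"
  shows "DL u x = ereal (c + W)"
proof -
  have present': "\<forall>w. c \<le> w \<and> w < u \<longrightarrow> TS w x \<noteq> Empty" using present by auto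
  consider (infinite) "DL u x = \<infinity>" "TS u x \<noteq> Empty \<longrightarrow> arrival x u"
    | (finite) c' where "arrival x c'" "c' < u" "DL u x = ereal (c' + W)"
        "\<forall>w. c' \<le> w \<and> w < u \<longrightarrow> TS w x \<noteq> Empty"
    using deadline_inv_holds[OF assms(1,2)] unfolding deadline_inv_def by blast
  then show ?thesis
  proof cases
    case infinite
    then have "arrival x u" using present assms(4) by auto
    then obtain w where "c \<le> w" "w < u" "TS w x = Empty"
      using arrival_preceded_by_Empty assms(4) by blast
    then show ?thesis using present' by blast
  next
    case finite
    then show ?thesis using arrival_unique[OF finite(1) assms(3) finite(2) assms(4) finite(4) present']
      by simp
  qed
qed

definition next_dir :: "real \<Rightarrow> dirv" where
  "next_dir t =
     (if \<exists>x\<in>Tracks. ereal t = DL t x then DClose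
      else if Di t = DClose \<and> (\<forall>x\<in>Tracks. TS t x = Empty \<or> ereal (t + dopen) < DL t x) then DOpen
      else Di t)"

lemma right_val_Di: "0 \<le> t \<Longrightarrow> right_val Di t (next_dir t)"
proof -
  assume "0 \<le> t"
  obtain s where s: "right_val \<rho> t s" using pre_run_right_val[OF pre_run_rho \<open>0 \<le> t\<close>] ..
  have "dir s = dir (apply_upd (ctrl t) (\<rho> t))"
    using right_val_rho_controller(1)[OF \<open>0 \<le> t\<close> s consistent_ctrl[OF \<open>0 \<le> t\<close>]] .
  also have "\<dots> = next_dir t"
    unfolding apply_upd_Controller_dir[OF consistent_ctrl[OF \<open>0 \<le> t\<close>]] next_dir_def safe_to_open_rho
    by auto
  finally show ?thesis using right_val_comp[OF s, of dir] by simp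
qed

lemma pos_sig_Di_iff: "0 < t \<Longrightarrow> t \<in> pos_sig Di \<longleftrightarrow> next_dir t \<noteq> Di t"
  using pos_sig_iff[OF _ left_val_Di right_val_Di] by simp

text \<open>The train whose deadline expires at a is coming during the whole of (a, a + dclose],
  which keeps SafeToOpen false.\<close>

lemma Di_stays_closed:
  assumes "0 \<le> a" "Di a = DOpen" "next_dir a = DClose" "a < u" "u \<le> a + dclose"
  shows "Di u = DClose"
proof (rule right_val_persists[where b = "a + dclose"])
  obtain x where x: "x \<in> Tracks" "ereal a = DL a x"
    using assms(2,3) unfolding next_dir_def by (auto split: if_splits)
  define c where "c = a - W"
  have "arrival x c" using deadline_expiry(1)[OF assms(1) x] unfolding c_def .
  then have coming: "TS w x = Coming" if "c \<le> w" "w < a + dclose" for w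
    using arrival_Coming that unfolding c_def by simp
  fix s assume s: "a < s" "s < a + dclose" "Di s = DClose"
  have "c < s" using s dclose_less_dmin unfolding c_def by simp
  then have "DL s x = ereal a"
    using deadline_while_present[OF _ x(1) \<open>arrival x c\<close>] coming s assms(1) unfolding c_def by force
  then have "\<not> ereal (s + dopen) < DL s x" using s dopen_pos by simp
  moreover have "TS s x = Coming" using coming s \<open>c < s\<close> by simp
  ultimately have "next_dir s = DClose" using s(3) x(1) unfolding next_dir_def by auto
  then show "right_val Di s DClose" using right_val_Di[of s] s assms(1) by simp
qed (use assms right_val_Di[OF assms(1)] left_val_Di in auto)

definition gate_delay :: "dirv \<Rightarrow> real" where
  "gate_delay V = (case V of DClose \<Rightarrow> dclose | DOpen \<Rightarrow> dopen)"

lemma right_val_GS_cases: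
  assumes "0 \<le> t"
  obtains v where "right_val GS t v" "v = GS t \<or> v = gate_target (Di t)"
proof -
  obtain s where s: "right_val \<rho> t s" using pre_run_right_val[OF pre_run_rho assms] ..
  obtain M where "s = exec Tracks dclose dopen dmin M t (\<rho> t)" using right_val_rho_exec(1)[OF assms s] ..
  then have "gate s = GS t \<or> gate s = gate_target (Di t)" by (simp add: exec_gate)
  then show thesis using that right_val_comp[OF s, of gate] by simp
qed

lemma right_val_GS_matched: "0 \<le> t \<Longrightarrow> GS t = gate_target (Di t) \<Longrightarrow> right_val GS t (GS t)"
  using right_val_GS_cases by metis

lemma pos_sig_GS:
  assumes "t \<in> pos_sig GS"
  shows "0 < t" and "GS t \<noteq> gate_target (Di t)" and "right_val GS t (gate_target (Di t))"
proof -
  show "0 < t" using assms unfolding pos_sig_def by simp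
  then have "0 \<le> t" by simp
  then obtain v where v: "right_val GS t v" "v = GS t \<or> v = gate_target (Di t)"
    by (rule right_val_GS_cases)
  have "v \<noteq> GS t" using pos_sig_iff[OF \<open>0 < t\<close> left_val_GS[OF \<open>0 < t\<close>] v(1)] assms by simp
  then show "GS t \<noteq> gate_target (Di t)" and "right_val GS t (gate_target (Di t))"
    using v by auto
qed

lemma GS_follows_Di:
  assumes "0 \<le> p" "right_val GS p (gate_target V)" "\<forall>u. p < u \<and> u \<le> b \<longrightarrow> Di u = V"
    and "p < u" "u \<le> b"
  shows "GS u = gate_target V"
proof (rule right_val_persists[where b = b])
  fix s assume "p < s" "s < b" "GS s = gate_target V"
  then show "right_val GS s (gate_target V)" using right_val_GS_matched[of s] assms(1,3) by auto
qed (use assms left_val_GS in auto)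

lemma gate_reaches_target:
  assumes "0 \<le> a" and Di_V: "\<forall>u. a < u \<and> u < a + gate_delay V \<longrightarrow> Di u = V"
  obtains u where "a < u" "u < a + gate_delay V" "GS u = gate_target V"
proof (cases V)
  case DClose
  then obtain u where u: "a < u" "u < a + gate_delay V" "\<not> (Di u = DClose \<and> GS u = Opened)"
    using close_timing assms(1) unfolding gate_delay_def by auto
  then have "GS u = gate_target V" using Di_V DClose by (cases "GS u") auto
  then show thesis using that u by blast
next
  case DOpen
  then obtain u where u: "a < u" "u < a + gate_delay V" "\<not> (Di u = DOpen \<and> GS u = Closed)"
    using open_timing assms(1) unfolding gate_delay_def by auto
  then have "GS u = gate_target V" using Di_V DOpen by (cases "GS u") auto
  then show thesis using that u by blast
qed

lemma GS_changes_at_most_once: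
  assumes "0 \<le> a" and Di_V: "\<forall>u. a < u \<and> u \<le> b \<longrightarrow> Di u = V"
    and "t1 \<in> pos_sig GS" "t2 \<in> pos_sig GS" "a < t1" "t1 \<le> b" "a < t2" "t2 \<le> b"
  shows "t1 = t2"
proof -
  have False if "s1 \<in> pos_sig GS" "s2 \<in> pos_sig GS" "a < s1" "s1 < s2" "s2 \<le> b" for s1 s2
  proof -
    have "right_val GS s1 (gate_target V)" using pos_sig_GS(3)[OF that(1)] Di_V that(3-5) by auto
    then have "GS s2 = gate_target V" using GS_follows_Di[of s1 V b s2] Di_V assms(1) that by auto
    moreover have "GS s2 \<noteq> gate_target V" using pos_sig_GS(2)[OF that(2)] Di_V that(3-5) by auto
    ultimately show False by simp
  qed
  then show ?thesis using assms(3-8) by (metis linorder_neqE_linordered_idom)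
qed

lemma gate_switches_once:
  assumes a: "a \<in> pos_sig Di" and matched: "GS a = gate_target (Di a)"
    and quiet: "\<And>c. a < c \<Longrightarrow> c < b \<Longrightarrow> c \<notin> pos_sig Di"
    and long: "a + gate_delay (next_dir a) \<le> b"
  obtains \<delta> where "a < \<delta>" "\<delta> < a + gate_delay (next_dir a)" "\<delta> \<in> pos_sig GS"
    "\<And>t. t \<in> pos_sig GS \<Longrightarrow> a \<le> t \<Longrightarrow> t \<le> b \<Longrightarrow> t = \<delta>" "GS b = gate_target (Di b)"
proof -
  define V where "V = next_dir a"
  have "0 < a" using a unfolding pos_sig_def by simp
  then have "V \<noteq> Di a" using a pos_sig_Di_iff unfolding V_def by simp
  have Di_V: "Di u = V" if "a < u" "u \<le> b" for u
    using constant_without_pos_sig[OF pre_run_Di left_val_Di _ right_val_Di quiet that] \<open>0 < a\<close>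
    unfolding V_def by simp
  obtain u0 where u0: "a < u0" "u0 < a + gate_delay V" "GS u0 = gate_target V"
    using gate_reaches_target[of a V] Di_V long \<open>0 < a\<close> unfolding V_def by force
  have "u0 \<le> b" using u0(2) long unfolding V_def by simp
  have "right_val GS u0 (gate_target V)"
    using right_val_GS_matched[of u0] u0 Di_V[of u0] \<open>u0 \<le> b\<close> \<open>0 < a\<close> by simp
  then have GS_V: "GS u = gate_target V" if "u0 \<le> u" "u \<le> b" for u
    using GS_follows_Di[of u0 V b u] Di_V u0 \<open>0 < a\<close> that by (cases "u = u0") auto
  have "0 \<le> a" using \<open>0 < a\<close> by simp
  moreover have "GS u0 \<noteq> GS a" using u0(3) matched \<open>V \<noteq> Di a\<close> by simp
  ultimately obtain \<delta> where \<delta>: "a < \<delta>" "\<delta> < u0" "\<delta> \<in> pos_sig GS"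
    using pos_sig_between[OF pre_run_GS left_val_GS _ right_val_GS_matched[OF _ matched] u0(1)] by blast
  have unique: "t = \<delta>" if t: "t \<in> pos_sig GS" "a \<le> t" "t \<le> b" for t
  proof -
    have "t \<noteq> a" using pos_sig_GS(2)[OF t(1)] matched by auto
    then have "a < t" using t(2) by simp
    moreover have "\<forall>u. a < u \<and> u \<le> b \<longrightarrow> Di u = V" using Di_V by blast
    ultimately show "t = \<delta>"
      using GS_changes_at_most_once[OF \<open>0 \<le> a\<close> _ t(1) \<delta>(3)] t(3) \<delta>(1,2) \<open>u0 \<le> b\<close> by simp
  qed
  have "a < b" using u0(1) \<open>u0 \<le> b\<close> by simp
  then have "GS b = gate_target (Di b)"
    using GS_V[OF \<open>u0 \<le> b\<close> order_refl] Di_V[OF _ order_refl] by simp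
  moreover have "\<delta> < a + gate_delay (next_dir a)" using \<delta>(2) u0(2) unfolding V_def by simp
  ultimately show thesis using that \<delta>(1,3) unique by blast
qed

end

locale crossing_run_from_open = crossing_run +
  assumes dmin_ge: "dclose + dopen \<le> dmin" and Di_0: "Di 0 = DOpen" and GS_0: "GS 0 = Opened"
begin

text \<open>A deadline expiring before a + dopen was set at an arrival before a, because
  W \<ge> dopen; it was therefore already pending at a, and SignalOpen could not have fired.\<close>

lemma Di_stays_open:
  assumes "0 \<le> a" "Di a = DClose" "next_dir a = DOpen" "a < u" "u \<le> a + dopen"
  shows "Di u = DOpen"
proof (rule right_val_persists[where b = "a + dopen"])
  have safe: "\<forall>x\<in>Tracks. TS a x = Empty \<or> ereal (a + dopen) < DL a x"
    using assms(2,3) unfolding next_dir_def by (auto split: if_splits)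
  fix s assume s: "a < s" "s < a + dopen" "Di s = DOpen"
  have "ereal s \<noteq> DL s x" if x: "x \<in> Tracks" for x
  proof
    assume "ereal s = DL s x"
    then have "arrival x (s - W)" and present: "\<forall>w. s - W \<le> w \<and> w < s \<longrightarrow> TS w x \<noteq> Empty"
      using deadline_expiry[of s x] x s assms(1) by auto
    moreover have "s - W < a" using s dmin_ge by simp
    ultimately have "DL a x = ereal s"
      using deadline_while_present[OF assms(1) x] s by auto
    moreover have "TS a x \<noteq> Empty" using present \<open>s - W < a\<close> s by auto
    ultimately have "ereal (a + dopen) < ereal s" using safe x by auto
    then show False using s by simp
  qed
  then have "next_dir s = DOpen" using s unfolding next_dir_def by auto
  then show "right_val Di s DOpen" using right_val_Di[of s] s assms(1) by simp
qed (use assms right_val_Di[OF assms(1)] left_val_Di in auto)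

lemma Di_holds:
  assumes "0 \<le> a" "next_dir a \<noteq> Di a" "a < u" "u \<le> a + gate_delay (next_dir a)"
  shows "Di u = next_dir a"
proof (cases "Di a")
  case DOpen
  then have "next_dir a = DClose" using assms(2) by (cases "next_dir a") auto
  then show ?thesis using Di_stays_closed[OF assms(1) DOpen] assms(3,4) by (simp add: gate_delay_def)
next
  case DClose
  then have "next_dir a = DOpen" using assms(2) by (cases "next_dir a") auto
  then show ?thesis using Di_stays_open[OF assms(1) DClose] assms(3,4) by (simp add: gate_delay_def)
qed

lemma pos_sig_Di_gap:
  assumes "a \<in> pos_sig Di" "c \<in> pos_sig Di" "a < c"
  shows "a + gate_delay (next_dir a) \<le> c"
proof (rule ccontr)
  assume "\<not> a + gate_delay (next_dir a) \<le> c"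
  have "0 < a" using assms(1) unfolding pos_sig_def by simp
  then have "next_dir a \<noteq> Di a" using assms(1) pos_sig_Di_iff by simp
  then have hold: "Di u = next_dir a" if "a < u" "u \<le> a + gate_delay (next_dir a)" for u
    using Di_holds \<open>0 < a\<close> that by simp
  have "right_val Di c (next_dir a)"
    by (rule right_valI[of "a + gate_delay (next_dir a) - c"])
      (use hold assms(3) \<open>\<not> a + gate_delay (next_dir a) \<le> c\<close> in auto)
  then have "next_dir c = Di c"
    using right_val_unique right_val_Di hold assms(3) \<open>\<not> a + gate_delay (next_dir a) \<le> c\<close> \<open>0 < a\<close>
    by (metis less_eq_real_def not_le order.strict_trans)
  then show False using assms(2,3) pos_sig_Di_iff \<open>0 < a\<close> by simp
qed

lemma gate_idle_before_first_change:
  assumes "0 \<le> b" and quiet: "\<And>c. 0 < c \<Longrightarrow> c < b \<Longrightarrow> c \<notin> pos_sig Di"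
  shows "GS b = gate_target (Di b)" and "t \<in> pos_sig GS \<Longrightarrow> b < t"
proof -
  have "next_dir 0 = DOpen" using initial Di_0 unfolding next_dir_def by auto
  then have Di_open: "Di u = DOpen" if "0 \<le> u" "u \<le> b" for u
    using constant_without_pos_sig[OF pre_run_Di left_val_Di _ right_val_Di quiet, of 0 u] Di_0 that
    by (cases "u = 0") auto
  have "right_val GS 0 Opened" using right_val_GS_matched[of 0] Di_0 GS_0 by simp
  then have GS_opened: "GS u = Opened" if "0 \<le> u" "u \<le> b" for u
    using GS_follows_Di[of 0 DOpen b u] Di_open GS_0 that by (cases "u = 0") auto
  show "GS b = gate_target (Di b)" using Di_open GS_opened assms(1) by simp
  show "b < t" if "t \<in> pos_sig GS"
    using pos_sig_GS(1,2)[OF that] Di_open GS_opened by (metis gate_target.simps(1) less_imp_le not_le)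
qed

lemma gate_matched_at_dir_changes:
  assumes enum: "increasing_enum I \<gamma> (pos_sig Di)" and "i \<in> I"
  shows "GS (\<gamma> i) = gate_target (Di (\<gamma> i))"
  using \<open>i \<in> I\<close>
proof (induction i)
  case 0
  have "0 < \<gamma> 0" using increasing_enumD(3)[OF enum 0] unfolding pos_sig_def by simp
  then show ?case
    using gate_idle_before_first_change(1)[of "\<gamma> 0"] increasing_enum_before_first[OF enum] by simp
next
  case (Suc i)
  then have "i \<in> I" using increasing_enumD(1)[OF enum] by simp
  have "\<And>c. \<gamma> i < c \<Longrightarrow> c < \<gamma> (Suc i) \<Longrightarrow> c \<notin> pos_sig Di"
    using increasing_enum_gap[OF enum \<open>i \<in> I\<close>] by blast
  moreover have "\<gamma> i + gate_delay (next_dir (\<gamma> i)) \<le> \<gamma> (Suc i)"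
    using pos_sig_Di_gap[OF increasing_enumD(3)[OF enum \<open>i \<in> I\<close>] increasing_enumD(3)[OF enum Suc.prems]
        increasing_enumD(2)[OF enum lessI Suc.prems]] .
  ultimately show ?case
    using gate_switches_once[OF increasing_enumD(3)[OF enum \<open>i \<in> I\<close>] Suc.IH[OF \<open>i \<in> I\<close>]] by blast
qed

lemma unique_gate_change_after:
  assumes enum: "increasing_enum I \<gamma> (pos_sig Di)" and i: "i \<in> I"
  shows "\<exists>d. \<gamma> i < d \<and> d \<in> pos_sig GS \<and> (Suc i \<in> I \<longrightarrow> d < \<gamma> (Suc i)) \<and>
           (\<forall>t\<in>pos_sig GS. \<gamma> i \<le> t \<and> (Suc i \<in> I \<longrightarrow> t \<le> \<gamma> (Suc i)) \<longrightarrow> t = d)"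
proof -
  note sig = increasing_enumD(3)[OF enum i] and matched = gate_matched_at_dir_changes[OF enum i]
  show ?thesis
  proof (cases "Suc i \<in> I")
    case True
    have "\<And>c. \<gamma> i < c \<Longrightarrow> c < \<gamma> (Suc i) \<Longrightarrow> c \<notin> pos_sig Di"
      using increasing_enum_gap[OF enum i] by blast
    moreover have gap: "\<gamma> i + gate_delay (next_dir (\<gamma> i)) \<le> \<gamma> (Suc i)"
      using pos_sig_Di_gap[OF sig increasing_enumD(3)[OF enum True] increasing_enumD(2)[OF enum lessI True]] .
    ultimately obtain d where d: "\<gamma> i < d" "d < \<gamma> i + gate_delay (next_dir (\<gamma> i))" "d \<in> pos_sig GS"
      and unique: "\<And>t. t \<in> pos_sig GS \<Longrightarrow> \<gamma> i \<le> t \<Longrightarrow> t \<le> \<gamma> (Suc i) \<Longrightarrow> t = d"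
      using gate_switches_once[OF sig matched] by blast
    have "d < \<gamma> (Suc i)" using d(2) gap by linarith
    then show ?thesis using d(1,3) unique True by blast
  next
    case False
    then have no_later: "\<And>c. \<gamma> i < c \<Longrightarrow> c \<notin> pos_sig Di"
      using increasing_enum_gap[OF enum i] by blast
    define b0 where "b0 = \<gamma> i + gate_delay (next_dir (\<gamma> i))"
    have "\<And>c. \<gamma> i < c \<Longrightarrow> c < b0 \<Longrightarrow> c \<notin> pos_sig Di" using no_later by blast
    then obtain d where d: "\<gamma> i < d" "d < b0" "d \<in> pos_sig GS"
      using gate_switches_once[OF sig matched] unfolding b0_def by blast
    have "t = d" if t: "t \<in> pos_sig GS" "\<gamma> i \<le> t" for t
    proof -
      have "\<And>c. \<gamma> i < c \<Longrightarrow> c < max t b0 \<Longrightarrow> c \<notin> pos_sig Di" using no_later by blast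
      moreover have "\<gamma> i + gate_delay (next_dir (\<gamma> i)) \<le> max t b0" unfolding b0_def by simp
      ultimately obtain d' where
        unique: "\<And>t'. t' \<in> pos_sig GS \<Longrightarrow> \<gamma> i \<le> t' \<Longrightarrow> t' \<le> max t b0 \<Longrightarrow> t' = d'"
        using gate_switches_once[OF sig matched] by blast
      have "t = d'" by (rule unique) (use t in auto)
      moreover have "d = d'" by (rule unique) (use d in auto)
      ultimately show ?thesis by simp
    qed
    then show ?thesis using d(1,3) False by blast
  qed
qed

lemma gate_change_in_dir_interval:
  assumes enum: "increasing_enum I \<gamma> (pos_sig Di)" and "t \<in> pos_sig GS"
  obtains i where "i \<in> I" "\<gamma> i < t" "Suc i \<in> I \<Longrightarrow> t \<le> \<gamma> (Suc i)"
proof -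
  define J where "J = {i \<in> I. \<gamma> i < t}"
  have "0 < t" using assms(2) unfolding pos_sig_def by simp
  then obtain c where "c \<in> pos_sig Di" "c < t"
    using gate_idle_before_first_change(2)[of t] assms(2) by force
  then have "J \<noteq> {}" using increasing_enumD(4)[OF enum] unfolding J_def by force
  moreover have "finite J"
    unfolding J_def by (rule increasing_enum_finite_below[OF enum pre_run_finite_pos_sig[OF pre_run_Di]])
  ultimately have "Max J \<in> J" "\<And>j. j \<in> J \<Longrightarrow> j \<le> Max J" by simp_all
  then show thesis using that unfolding J_def by (metis (mono_tags, lifting) Suc_n_not_le_n mem_Collect_eq not_le)
qed

lemma gate_changes_interleave:
  assumes enum: "increasing_enum I \<gamma> (pos_sig Di)"
  obtains \<delta> where "increasing_enum I \<delta> (pos_sig GS)"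
    and "\<And>i. i \<in> I \<Longrightarrow> \<gamma> i < \<delta> i" and "\<And>i. Suc i \<in> I \<Longrightarrow> \<delta> i < \<gamma> (Suc i)"
proof -
  define P where "P i d \<longleftrightarrow> \<gamma> i < d \<and> d \<in> pos_sig GS \<and> (Suc i \<in> I \<longrightarrow> d < \<gamma> (Suc i)) \<and>
     (\<forall>t\<in>pos_sig GS. \<gamma> i \<le> t \<and> (Suc i \<in> I \<longrightarrow> t \<le> \<gamma> (Suc i)) \<longrightarrow> t = d)" for i d
  define \<delta> where "\<delta> i = (SOME d. P i d)" for i
  have \<delta>: "P i (\<delta> i)" if "i \<in> I" for i
    unfolding \<delta>_def using unique_gate_change_after[OF enum that] unfolding P_def by (rule someI_ex)
  have down: "i \<in> I" if "j \<in> I" "i \<le> j" for i j using increasing_enumD(1)[OF enum] that .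
  have "\<delta> i < \<delta> j" if "i < j" "j \<in> I" for i j
  proof -
    have "Suc i \<in> I" "i \<in> I" using down that by (auto simp: Suc_le_eq)
    moreover have "\<gamma> (Suc i) \<le> \<gamma> j"
      using increasing_enumD(2)[OF enum, of "Suc i" j] that by (cases "Suc i = j") auto
    ultimately show ?thesis using \<delta>[of i] \<delta>[of j] \<open>j \<in> I\<close> unfolding P_def by fastforce
  qed
  moreover have "\<delta> ` I = pos_sig GS"
  proof
    show "\<delta> ` I \<subseteq> pos_sig GS" using \<delta> unfolding P_def by blast
    show "pos_sig GS \<subseteq> \<delta> ` I"
    proof
      fix t assume t: "t \<in> pos_sig GS"
      then obtain i where "i \<in> I" "\<gamma> i < t" "Suc i \<in> I \<Longrightarrow> t \<le> \<gamma> (Suc i)"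
        using gate_change_in_dir_interval[OF enum] by blast
      then have "t = \<delta> i" using \<delta>[of i] t unfolding P_def by auto
      then show "t \<in> \<delta> ` I" using \<open>i \<in> I\<close> by blast
    qed
  qed
  ultimately have "increasing_enum I \<delta> (pos_sig GS)" unfolding increasing_enum_def using down by blast
  moreover have "\<gamma> i < \<delta> i" if "i \<in> I" for i using \<delta>[OF that] unfolding P_def by blast
  moreover have "\<delta> i < \<gamma> (Suc i)" if "Suc i \<in> I" for i using \<delta>[of i] down[OF that] that unfolding P_def by simp
  ultimately show thesis using that by blast
qed

end

theorem mainTheorem14:
  fixes Tracks :: "'tr set" and dclose dopen dmin dmax :: real
    and TS :: "real \<Rightarrow> 'tr \<Rightarrow> tstat" and DL :: "real \<Rightarrow> 'tr \<Rightarrow> ereal"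
    and Di :: "real \<Rightarrow> dirv" and GS :: "real \<Rightarrow> gstat"
  assumes "finite Tracks"
    and "0 < dclose" and "0 < dopen" and "0 < dmin" and "0 < dmax"
    and "dclose < dmin" and "dmin \<le> dmax"
    and "dmin \<ge> dclose + dopen"
    and "regular_run Tracks dclose dopen dmin dmax TS DL Di GS"
    and "Di 0 = DOpen" and "GS 0 = Opened"
  shows "(\<forall>\<gamma>. strict_mono \<gamma> \<and> range \<gamma> = pos_sig Di \<longrightarrow>
            (\<exists>\<delta>. strict_mono \<delta> \<and> range \<delta> = pos_sig GS \<and>
                  (\<forall>i. \<gamma> i < \<delta> i \<and> \<delta> i < \<gamma> (Suc i)))) \<and>
         (\<forall>(\<gamma>::nat \<Rightarrow> real) n. (\<forall>i j. i < j \<and> j < n \<longrightarrow> \<gamma> i < \<gamma> j) \<and> \<gamma> ` {..<n} = pos_sig Di \<longrightarrow>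
            (\<exists>\<delta>::nat \<Rightarrow> real. (\<forall>i j. i < j \<and> j < n \<longrightarrow> \<delta> i < \<delta> j) \<and> \<delta> ` {..<n} = pos_sig GS \<and>
                  (\<forall>i. Suc i < n \<longrightarrow> \<gamma> i < \<delta> i \<and> \<delta> i < \<gamma> (Suc i)) \<and>
                  (0 < n \<longrightarrow> \<gamma> (n - 1) < \<delta> (n - 1))))"
proof -
  interpret crossing_run_from_open Tracks dclose dopen dmin dmax TS DL Di GS
    using assms by unfold_locales auto
  show ?thesis
  proof (intro conjI allI impI)
    fix \<gamma> :: "nat \<Rightarrow> real"
    assume "strict_mono \<gamma> \<and> range \<gamma> = pos_sig Di"
    then obtain \<delta> where "increasing_enum UNIV \<delta> (pos_sig GS)"
      and "\<And>i. i \<in> UNIV \<Longrightarrow> \<gamma> i < \<delta> i" "\<And>i. Suc i \<in> UNIV \<Longrightarrow> \<delta> i < \<gamma> (Suc i)"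
      by (rule gate_changes_interleave[OF increasing_enum_UNIV_iff[THEN iffD2]]) blast
    then show "\<exists>\<delta>. strict_mono \<delta> \<and> range \<delta> = pos_sig GS \<and> (\<forall>i. \<gamma> i < \<delta> i \<and> \<delta> i < \<gamma> (Suc i))"
      unfolding increasing_enum_UNIV_iff by blast
  next
    fix \<gamma> :: "nat \<Rightarrow> real" and n :: nat
    assume "(\<forall>i j. i < j \<and> j < n \<longrightarrow> \<gamma> i < \<gamma> j) \<and> \<gamma> ` {..<n} = pos_sig Di"
    then obtain \<delta> where "increasing_enum {..<n} \<delta> (pos_sig GS)"
      and "\<And>i. i \<in> {..<n} \<Longrightarrow> \<gamma> i < \<delta> i" "\<And>i. Suc i \<in> {..<n} \<Longrightarrow> \<delta> i < \<gamma> (Suc i)"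
      by (rule gate_changes_interleave[OF increasing_enum_lessThan_iff[THEN iffD2]]) blast
    then show "\<exists>\<delta>. (\<forall>i j. i < j \<and> j < n \<longrightarrow> \<delta> i < \<delta> j) \<and> \<delta> ` {..<n} = pos_sig GS \<and>
        (\<forall>i. Suc i < n \<longrightarrow> \<gamma> i < \<delta> i \<and> \<delta> i < \<gamma> (Suc i)) \<and> (0 < n \<longrightarrow> \<gamma> (n - 1) < \<delta> (n - 1))"
      unfolding increasing_enum_lessThan_iff by (intro exI[of _ \<delta>]) auto
  qed
qed

end
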